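(* Let $\Sigma$, $V$ and $f: V\to\mathbb{Z}^3$ be as in the context, and let $A \subseteq V$ be a set of triangles. Then: (1) $A$ is edge-connected if and only if $f(A)$ is 6-connected; (2) $A$ is vertex-connected if and only if $f(A)$ is 26-connected.
   Context: $\Sigma$ denotes the regular tiling of the Euclidean plane by congruent equilateral triangles. The lines containing the edges of the tiling fall into three parallel classes, numbered $i=1,2,3$; within each class the lines are equally spaced. $V$ denotes the set of triangles of $\Sigma$. Consistent labeling: fix a base triangle $v_0$. For $i=1,2,3$ let $H_{i,0}$ be the line of class $i$ containing a side of $v_0$, and $H_{i,-1}$ the line of class $i$ through the vertex of $v_0$ opposite that side. Index all lines of class $i$ by integers $H_{i,k}$, $k\in\mathbb{Z}$, so that consecutive (adjacent) parallel lines have consecutive indices and indices increase in the direction from $H_{i,-1}$ to $H_{i,0}$. Coordinates and cubulation map: for a triangle $v \in V$ set $v_i := k$ if $v$ lies between $H_{i,k}$ and $H_{i,k-1}$; define $f: V \to \mathbb{Z}^3$, $f(v) = (v_1, v_2, v_3)$. A set $A$ of triangles is edge-connected if for any $u,v\in A$ there is a sequence $u=w_0,w_1,\dots,w_n=v$ of triangles in $A$ with $w_j$ and $w_{j+1}$ sharing a side for all $j$; it is vertex-connected if the same holds with "sharing a side" replaced by "sharing a vertex". A set $S\subseteq\mathbb{Z}^3$ is 6-connected (face-connected) if any two points of $S$ are joined by a sequence of points of $S$ in which consecutive points differ by $1$ in exactly one coordinate and agree in the others; it is 26-connected (vertex-connected) if any two points of $S$ are joined by a sequence of points of $S$ in which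 consecutive points are distinct and differ by at most $1$ in each coordinate. *)

theory Defs
  imports "HOL-Analysis.Analysis"
begin

definition e1 :: "real \<times> real" where "e1 = (1, 0)"
definition e2 :: "real \<times> real" where "e2 = (1/2, sqrt 3 / 2)"

definition lpt :: "int \<Rightarrow> int \<Rightarrow> real \<times> real" where
  "lpt a b = of_int a *\<^sub>R e1 + of_int b *\<^sub>R e2"

definition up_tri :: "int \<Rightarrow> int \<Rightarrow> (real \<times> real) set" where
  "up_tri a b = convex hull {lpt a b, lpt (a+1) b, lpt a (b+1)}"

definition down_tri :: "int \<Rightarrow> int \<Rightarrow> (real \<times> real) set" where
  "down_tri a b = convex hull {lpt (a+1) b, lpt a (b+1), lpt (a+1) (b+1)}"

definition tiles :: "(real \<times> real) set set" where
  "tiles = {up_tri a b | a b. True} \<union> {down_tri a b | a b. True}"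

definition v0 :: "(real \<times> real) set" where "v0 = up_tri 0 0"

text \<open>Lattice coordinates (a,b) of a point p = a e1 + b e2.\<close>
definition la :: "real \<times> real \<Rightarrow> real" where "la p = fst p - snd p / sqrt 3"
definition lb :: "real \<times> real \<Rightarrow> real" where "lb p = 2 * snd p / sqrt 3"

text \<open>Class 1: lines parallel to the side [0,e1] of v0;
  class 2: parallel to the side [e1,e2]; class 3: parallel to the side [0,e2].
  In each class H_{i,0} contains the side of v0, H_{i,-1} passes through the
  opposite vertex, consecutive lines have consecutive indices and indices grow
  from H_{i,-1} towards H_{i,0}.\<close>
definition line_fun :: "nat \<Rightarrow> real \<times> real \<Rightarrow> real" where
  "line_fun i p = (if i = 1 then - lb p
                   else if i = 2 then la p + lb p - 1
                   else - la p)"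

definition H :: "nat \<Rightarrow> int \<Rightarrow> (real \<times> real) set" where
  "H i k = {p. line_fun i p = of_int k}"

definition between_lines :: "(real \<times> real) set \<Rightarrow> nat \<Rightarrow> int \<Rightarrow> bool" where
  "between_lines v i k \<longleftrightarrow> v \<subseteq> {p. of_int k - 1 \<le> line_fun i p \<and> line_fun i p \<le> of_int k}"

definition tcoord :: "nat \<Rightarrow> (real \<times> real) set \<Rightarrow> int" where
  "tcoord i v = (THE k. between_lines v i k)"

definition cub :: "(real \<times> real) set \<Rightarrow> int \<times> int \<times> int" where
  "cub v = (tcoord 1 v, tcoord 2 v, tcoord 3 v)"

definition chain_connected :: "('a \<Rightarrow> 'a \<Rightarrow> bool) \<Rightarrow> 'a set \<Rightarrow> bool" where
  "chain_connected R A \<longleftrightarrow>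
     (\<forall>u\<in>A. \<forall>v\<in>A. \<exists>ws. ws \<noteq> [] \<and> hd ws = u \<and> last ws = v \<and> set ws \<subseteq> A \<and>
        (\<forall>j. Suc j < length ws \<longrightarrow> R (ws ! j) (ws ! Suc j)))"

text \<open>Vertices of a triangle are its extreme points; a side is the segment
  between two distinct vertices.\<close>
definition share_side :: "(real \<times> real) set \<Rightarrow> (real \<times> real) set \<Rightarrow> bool" where
  "share_side u w \<longleftrightarrow> (\<exists>p q. p \<noteq> q \<and> p extreme_point_of u \<and> q extreme_point_of u \<and>
                               p extreme_point_of w \<and> q extreme_point_of w)"

definition share_vertex :: "(real \<times> real) set \<Rightarrow> (real \<times> real) set \<Rightarrow> bool" where
  "share_vertex u w \<longleftrightarrow> (\<exists>p. p extreme_point_of u \<and> p extreme_point_of w)"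

definition edge_connected :: "(real \<times> real) set set \<Rightarrow> bool" where
  "edge_connected A \<longleftrightarrow> chain_connected share_side A"

definition vertex_connected :: "(real \<times> real) set set \<Rightarrow> bool" where
  "vertex_connected A \<longleftrightarrow> chain_connected share_vertex A"

definition adj6 :: "int \<times> int \<times> int \<Rightarrow> int \<times> int \<times> int \<Rightarrow> bool" where
  "adj6 x y \<longleftrightarrow> (case x of (x1, x2, x3) \<Rightarrow> case y of (y1, y2, y3) \<Rightarrow>
      (\<bar>x1 - y1\<bar> = 1 \<and> x2 = y2 \<and> x3 = y3) \<or>
      (x1 = y1 \<and> \<bar>x2 - y2\<bar> = 1 \<and> x3 = y3) \<or>
      (x1 = y1 \<and> x2 = y2 \<and> \<bar>x3 - y3\<bar> = 1))"

definition adj26 :: "int \<times> int \<times> int \<Rightarrow> int \<times> int \<times> int \<Rightarrow> bool" where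
  "adj26 x y \<longleftrightarrow> x \<noteq> y \<and> (case x of (x1, x2, x3) \<Rightarrow> case y of (y1, y2, y3) \<Rightarrow>
      \<bar>x1 - y1\<bar> \<le> 1 \<and> \<bar>x2 - y2\<bar> \<le> 1 \<and> \<bar>x3 - y3\<bar> \<le> 1)"

definition connected6 :: "(int \<times> int \<times> int) set \<Rightarrow> bool" where
  "connected6 S \<longleftrightarrow> chain_connected adj6 S"

definition connected26 :: "(int \<times> int \<times> int) set \<Rightarrow> bool" where
  "connected26 S \<longleftrightarrow> chain_connected adj26 S"

end

theory Submission
  imports Defs
begin

text \<open>In lattice coordinates the tiles are the up-triangles with corners (a,b), (a+1,b), (a,b+1)
  and the down-triangles with corners (a+1,b), (a,b+1), (a+1,b+1); the cubulation map cub sends them to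
  (-b, a+b, -a) and (-b, a+b+1, -a) respectively, so cub is injective. Comparing the corner sets
  shows that two distinct tiles share exactly two corners when their images are 6-adjacent,
  exactly one when the images are 26- but not 6-adjacent, and none otherwise. Hence cub is an
  isomorphism between the side-adjacency (vertex-adjacency) graph on tiles and the
  6-adjacency (26-adjacency) graph on their images, and chain connectedness is invariant
  under such isomorphisms.\<close>

lemma rtranclp_of_chain:
  assumes "ws \<noteq> []" "set ws \<subseteq> A" "\<forall>j. Suc j < length ws \<longrightarrow> R (ws ! j) (ws ! Suc j)"
  shows "(\<lambda>x y. x \<in> A \<and> y \<in> A \<and> R x y)\<^sup>*\<^sup>* (hd ws) (last ws)"
  using assms
proof (induction ws)
  case Nil
  then show ?case by simp
next
  case (Cons x xs)
  let ?RA = "\<lambda>x y. x \<in> A \<and> y \<in> A \<and> R x y"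
  show ?case
  proof (cases "xs = []")
    case True
    then show ?thesis by simp
  next
    case False
    have "\<forall>j. Suc j < length xs \<longrightarrow> R (xs ! j) (xs ! Suc j)"
      using Cons.prems(3) by (metis Suc_less_eq length_Cons nth_Cons_Suc)
    then have "?RA\<^sup>*\<^sup>* (hd xs) (last xs)"
      using Cons False by simp
    moreover have "?RA x (hd xs)"
      using Cons.prems False spec[OF Cons.prems(3), of 0] by (auto simp: hd_conv_nth)
    ultimately show ?thesis
      using False converse_rtranclp_into_rtranclp[of ?RA x "hd xs" "last xs"] by simp
  qed
qed

lemma chain_of_rtranclp:
  assumes "(\<lambda>x y. x \<in> A \<and> y \<in> A \<and> R x y)\<^sup>*\<^sup>* u v" "v \<in> A"
  shows "\<exists>ws. ws \<noteq> [] \<and> hd ws = u \<and> last ws = v \<and> set ws \<subseteq> A \<and>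
           (\<forall>j. Suc j < length ws \<longrightarrow> R (ws ! j) (ws ! Suc j))"
  using assms
proof (induction rule: converse_rtranclp_induct)
  case base
  then show ?case by (intro exI[of _ "[v]"]) auto
next
  case (step y z)
  then obtain ws where ws: "ws \<noteq> []" "hd ws = z" "last ws = v" "set ws \<subseteq> A"
    "\<forall>j. Suc j < length ws \<longrightarrow> R (ws ! j) (ws ! Suc j)" by blast
  have "R ((y # ws) ! j) ((y # ws) ! Suc j)" if "Suc j < length (y # ws)" for j
    using that ws step(1) by (cases j) (auto simp: hd_conv_nth)
  then show ?case using ws step(1) by (intro exI[of _ "y # ws"]) auto
qed

lemma chain_connected_iff_rtranclp:
  "chain_connected R A \<longleftrightarrow> (\<forall>u\<in>A. \<forall>v\<in>A. (\<lambda>x y. x \<in> A \<and> y \<in> A \<and> R x y)\<^sup>*\<^sup>* u v)"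
proof
  assume connected: "chain_connected R A"
  show "\<forall>u\<in>A. \<forall>v\<in>A. (\<lambda>x y. x \<in> A \<and> y \<in> A \<and> R x y)\<^sup>*\<^sup>* u v"
  proof (intro ballI)
    fix u v assume "u \<in> A" "v \<in> A"
    with connected obtain ws where "ws \<noteq> []" "hd ws = u" "last ws = v" "set ws \<subseteq> A"
      "\<forall>j. Suc j < length ws \<longrightarrow> R (ws ! j) (ws ! Suc j)"
      unfolding chain_connected_def by blast
    then show "(\<lambda>x y. x \<in> A \<and> y \<in> A \<and> R x y)\<^sup>*\<^sup>* u v"
      using rtranclp_of_chain[of ws A R] by simp
  qed
next
  assume "\<forall>u\<in>A. \<forall>v\<in>A. (\<lambda>x y. x \<in> A \<and> y \<in> A \<and> R x y)\<^sup>*\<^sup>* u v"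
  then show "chain_connected R A"
    unfolding chain_connected_def using chain_of_rtranclp[of A R] by simp
qed

lemma rtranclp_map_distinct:
  assumes "P\<^sup>*\<^sup>* x y" and "\<And>a b. P a b \<Longrightarrow> a \<noteq> b \<Longrightarrow> Q (h a) (h b)"
  shows "Q\<^sup>*\<^sup>* (h x) (h y)"
  using assms(1)
proof (induction rule: rtranclp_induct)
  case base
  then show ?case by simp
next
  case (step y z)
  then show ?case using assms(2) by (cases "y = z") (auto intro: rtranclp.rtrancl_into_rtrancl)
qed

lemma chain_connected_image:
  assumes inj: "inj_on f A"
    and adj: "\<And>u w. u \<in> A \<Longrightarrow> w \<in> A \<Longrightarrow> u \<noteq> w \<Longrightarrow> R u w \<longleftrightarrow> S (f u) (f w)"
  shows "chain_connected R A \<longleftrightarrow> chain_connected S (f ` A)"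
proof -
  let ?RA = "\<lambda>x y. x \<in> A \<and> y \<in> A \<and> R x y"
  let ?SA = "\<lambda>x y. x \<in> f ` A \<and> y \<in> f ` A \<and> S x y"
  let ?g = "inv_into A f"
  have image_path: "?SA\<^sup>*\<^sup>* (f u) (f v)" if "?RA\<^sup>*\<^sup>* u v" for u v
    using that by (rule rtranclp_map_distinct) (use adj in \<open>auto\<close>)
  have preimage_path: "?RA\<^sup>*\<^sup>* u v" if "?SA\<^sup>*\<^sup>* (f u) (f v)" "u \<in> A" "v \<in> A" for u v
  proof -
    have "?RA\<^sup>*\<^sup>* (?g (f u)) (?g (f v))"
      using that(1)
    proof (rule rtranclp_map_distinct)
      fix a b assume "?SA a b" "a \<noteq> b"
      then show "?RA (?g a) (?g b)"
        using adj[of "?g a" "?g b"] inj by (force simp: inv_into_into f_inv_into_f)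
    qed
    then show ?thesis using inj that(2,3) by simp
  qed
  show ?thesis
    unfolding chain_connected_iff_rtranclp using image_path preimage_path by blast
qed

lemma la_lpt [simp]: "la (lpt a b) = of_int a"
  by (simp add: la_def lpt_def e1_def e2_def)

lemma lb_lpt [simp]: "lb (lpt a b) = of_int b"
  by (simp add: lb_def lpt_def e1_def e2_def)

lemma la_add [simp]: "la (x + y) = la x + la y"
  by (simp add: la_def add_divide_distrib)

lemma lb_add [simp]: "lb (x + y) = lb x + lb y"
  by (simp add: lb_def add_divide_distrib)

lemma la_scaleR [simp]: "la (u *\<^sub>R x) = u * la x"
  by (simp add: la_def algebra_simps)

lemma lb_scaleR [simp]: "lb (u *\<^sub>R x) = u * lb x"
  by (simp add: lb_def algebra_simps)

lemma lpt_eq_iff [simp]: "lpt a b = lpt c d \<longleftrightarrow> a = c \<and> b = d"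
  by (metis la_lpt lb_lpt of_int_eq_iff)

lemma notin_segment_of_level:
  assumes "\<alpha> * la P + \<beta> * lb P = \<gamma>" "\<alpha> * la Q + \<beta> * lb Q = \<gamma>" "\<alpha> * la X + \<beta> * lb X \<noteq> \<gamma>"
  shows "X \<notin> convex hull {P, Q}"
proof
  assume "X \<in> convex hull {P, Q}"
  then obtain u v where uv: "u + v = 1" "X = u *\<^sub>R P + v *\<^sub>R Q"
    by (auto simp: convex_hull_2)
  have "\<alpha> * la X + \<beta> * lb X = u * (\<alpha> * la P + \<beta> * lb P) + v * (\<alpha> * la Q + \<beta> * lb Q)"
    using uv by (simp add: algebra_simps)
  also have "\<dots> = (u + v) * \<gamma>"
    using assms(1,2) by (simp add: algebra_simps)
  finally show False
    using assms(3) uv(1) by simp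
qed

lemma extreme_point_of_convex_hull_3:
  fixes x :: "'a::euclidean_space"
  assumes "a \<notin> convex hull {b, c}" "b \<notin> convex hull {a, c}" "c \<notin> convex hull {a, b}"
  shows "x extreme_point_of convex hull {a, b, c} \<longleftrightarrow> x \<in> {a, b, c}"
proof (rule extreme_point_of_convex_hull_convex_independent)
  show "compact {a, b, c}"
    by (rule finite_imp_compact) simp
  have "a \<noteq> b" by (metis assms(1) hull_inc insertI1)
  moreover have "a \<noteq> c" by (metis assms(1) hull_inc insertI1 insert_commute)
  moreover have "b \<noteq> c" by (metis assms(2) hull_inc insertI1 insert_commute)
  ultimately have "{a, b, c} - {a} = {b, c}" "{a, b, c} - {b} = {a, c}" "{a, b, c} - {c} = {a, b}"
    by auto
  then show "y \<notin> convex hull ({a, b, c} - {y})" if "y \<in> {a, b, c}" for y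
    using that assms by (elim insertE emptyE) simp_all
qed

lemma extreme_point_of_up_tri:
  "p extreme_point_of up_tri a b \<longleftrightarrow> p \<in> {lpt a b, lpt (a + 1) b, lpt a (b + 1)}"
  unfolding up_tri_def
proof (rule extreme_point_of_convex_hull_3)
  show "lpt a b \<notin> convex hull {lpt (a + 1) b, lpt a (b + 1)}"
    by (rule notin_segment_of_level[where \<alpha> = 1 and \<beta> = 1 and \<gamma> = "a + b + 1"]) simp_all
  show "lpt (a + 1) b \<notin> convex hull {lpt a b, lpt a (b + 1)}"
    by (rule notin_segment_of_level[where \<alpha> = 1 and \<beta> = 0 and \<gamma> = a]) simp_all
  show "lpt a (b + 1) \<notin> convex hull {lpt a b, lpt (a + 1) b}"
    by (rule notin_segment_of_level[where \<alpha> = 0 and \<beta> = 1 and \<gamma> = b]) simp_all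
qed

lemma extreme_point_of_down_tri:
  "p extreme_point_of down_tri a b \<longleftrightarrow> p \<in> {lpt (a + 1) b, lpt a (b + 1), lpt (a + 1) (b + 1)}"
  unfolding down_tri_def
proof (rule extreme_point_of_convex_hull_3)
  show "lpt (a + 1) b \<notin> convex hull {lpt a (b + 1), lpt (a + 1) (b + 1)}"
    by (rule notin_segment_of_level[where \<alpha> = 0 and \<beta> = 1 and \<gamma> = "b + 1"]) simp_all
  show "lpt a (b + 1) \<notin> convex hull {lpt (a + 1) b, lpt (a + 1) (b + 1)}"
    by (rule notin_segment_of_level[where \<alpha> = 1 and \<beta> = 0 and \<gamma> = "a + 1"]) simp_all
  show "lpt (a + 1) (b + 1) \<notin> convex hull {lpt (a + 1) b, lpt a (b + 1)}"
    by (rule notin_segment_of_level[where \<alpha> = 1 and \<beta> = 1 and \<gamma> = "a + b + 1"]) simp_all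
qed

lemma la_lb_bounds_up_tri:
  assumes "p \<in> up_tri a b"
  shows "of_int a \<le> la p \<and> of_int b \<le> lb p \<and> la p + lb p \<le> of_int a + of_int b + 1"
proof -
  obtain u v w where uvw: "0 \<le> u" "0 \<le> v" "0 \<le> w" "u + v + w = 1"
    "p = u *\<^sub>R lpt a b + v *\<^sub>R lpt (a + 1) b + w *\<^sub>R lpt a (b + 1)"
    using assms unfolding up_tri_def convex_hull_3 by blast
  have "la p = (u + v + w) * of_int a + v" "lb p = (u + v + w) * of_int b + w"
    using uvw(5) by (simp_all add: algebra_simps)
  then show ?thesis using uvw(1-4) by simp
qed

lemma la_lb_bounds_down_tri:
  assumes "p \<in> down_tri a b"
  shows "la p \<le> of_int a + 1 \<and> lb p \<le> of_int b + 1 \<and> of_int a + of_int b + 1 \<le> la p + lb p"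
proof -
  obtain u v w where uvw: "0 \<le> u" "0 \<le> v" "0 \<le> w" "u + v + w = 1"
    "p = u *\<^sub>R lpt (a + 1) b + v *\<^sub>R lpt a (b + 1) + w *\<^sub>R lpt (a + 1) (b + 1)"
    using assms unfolding down_tri_def convex_hull_3 by blast
  have "la p = (u + v + w) * (of_int a + 1) - v" "lb p = (u + v + w) * (of_int b + 1) - u"
    using uvw(5) by (simp_all add: algebra_simps)
  then show ?thesis using uvw(1-4) by simp
qed

text \<open>Two points of v on the lines of index k - 1 and k pin down the strip, so the
  description in tcoord_def is unique.\<close>

lemma tcoord_eqI:
  assumes "between_lines v i k"
    and "p \<in> v" "line_fun i p = of_int k - 1" and "q \<in> v" "line_fun i q = of_int k"
  shows "tcoord i v = k"
  unfolding tcoord_def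
proof (rule the_equality)
  fix k' assume "between_lines v i k'"
  then have "of_int k' - 1 \<le> line_fun i p" "line_fun i q \<le> of_int k'"
    using assms(2,4) by (auto simp: between_lines_def)
  then have "real_of_int k' \<le> of_int k" "real_of_int k \<le> of_int k'"
    using assms(3,5) by simp_all
  then show "k' = k" by simp
qed (fact assms(1))

lemma cub_up_tri: "cub (up_tri a b) = (- b, a + b, - a)"
proof -
  have vertices: "lpt a b \<in> up_tri a b" "lpt (a + 1) b \<in> up_tri a b" "lpt a (b + 1) \<in> up_tri a b"
    unfolding up_tri_def by (simp_all add: hull_inc)
  have "tcoord 1 (up_tri a b) = - b"
    by (rule tcoord_eqI[where p = "lpt a (b + 1)" and q = "lpt a b"])
      (use vertices in \<open>auto simp: between_lines_def line_fun_def dest!: la_lb_bounds_up_tri\<close>)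
  moreover have "tcoord 2 (up_tri a b) = a + b"
    by (rule tcoord_eqI[where p = "lpt a b" and q = "lpt (a + 1) b"])
      (use vertices in \<open>auto simp: between_lines_def line_fun_def dest!: la_lb_bounds_up_tri\<close>)
  moreover have "tcoord 3 (up_tri a b) = - a"
    by (rule tcoord_eqI[where p = "lpt (a + 1) b" and q = "lpt a b"])
      (use vertices in \<open>auto simp: between_lines_def line_fun_def dest!: la_lb_bounds_up_tri\<close>)
  ultimately show ?thesis by (simp add: cub_def)
qed

lemma cub_down_tri: "cub (down_tri a b) = (- b, a + b + 1, - a)"
proof -
  have vertices: "lpt (a + 1) b \<in> down_tri a b" "lpt a (b + 1) \<in> down_tri a b"
      "lpt (a + 1) (b + 1) \<in> down_tri a b"
    unfolding down_tri_def by (simp_all add: hull_inc)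
  have "tcoord 1 (down_tri a b) = - b"
    by (rule tcoord_eqI[where p = "lpt a (b + 1)" and q = "lpt (a + 1) b"])
      (use vertices in \<open>auto simp: between_lines_def line_fun_def dest!: la_lb_bounds_down_tri\<close>)
  moreover have "tcoord 2 (down_tri a b) = a + b + 1"
    by (rule tcoord_eqI[where p = "lpt (a + 1) b" and q = "lpt (a + 1) (b + 1)"])
      (use vertices in \<open>auto simp: between_lines_def line_fun_def dest!: la_lb_bounds_down_tri\<close>)
  moreover have "tcoord 3 (down_tri a b) = - a"
    by (rule tcoord_eqI[where p = "lpt (a + 1) b" and q = "lpt a (b + 1)"])
      (use vertices in \<open>auto simp: between_lines_def line_fun_def dest!: la_lb_bounds_down_tri\<close>)
  ultimately show ?thesis by (simp add: cub_def)
qed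

lemma cub_inj_on_tiles: "inj_on cub tiles"
  by (rule inj_onI) (auto simp: tiles_def cub_up_tri cub_down_tri)

definition corners :: "(real \<times> real) set \<Rightarrow> (int \<times> int) set" where
  "corners v = {(a, b). lpt a b extreme_point_of v}"

lemma corners_up_tri: "corners (up_tri a b) = {(a, b), (a + 1, b), (a, b + 1)}"
  by (auto simp: corners_def extreme_point_of_up_tri)

lemma corners_down_tri: "corners (down_tri a b) = {(a + 1, b), (a, b + 1), (a + 1, b + 1)}"
  by (auto simp: corners_def extreme_point_of_down_tri)

lemma extreme_point_of_tile_iff:
  assumes "v \<in> tiles"
  shows "p extreme_point_of v \<longleftrightarrow> p \<in> case_prod lpt ` corners v"
  using assms by (auto simp: tiles_def corners_up_tri corners_down_tri
      extreme_point_of_up_tri extreme_point_of_down_tri)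

lemma finite_corners: "v \<in> tiles \<Longrightarrow> finite (corners v)"
  by (auto simp: tiles_def corners_up_tri corners_down_tri)

lemma share_vertex_iff_common_corner:
  assumes "u \<in> tiles" "w \<in> tiles"
  shows "share_vertex u w \<longleftrightarrow> corners u \<inter> corners w \<noteq> {}"
  by (auto simp: share_vertex_def extreme_point_of_tile_iff[OF assms(1)]
      extreme_point_of_tile_iff[OF assms(2)])

lemma share_side_iff_two_common_corners:
  assumes "u \<in> tiles" "w \<in> tiles"
  shows "share_side u w \<longleftrightarrow> 2 \<le> card (corners u \<inter> corners w)"
proof -
  let ?E = "{p. p extreme_point_of u \<and> p extreme_point_of w}"
  have inj: "inj (case_prod lpt)"
    by (auto simp: inj_def)
  have E: "?E = case_prod lpt ` (corners u \<inter> corners w)"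
    using extreme_point_of_tile_iff[OF assms(1)] extreme_point_of_tile_iff[OF assms(2)]
    by (simp add: image_Int[OF inj] Collect_conj_eq)
  have "share_side u w \<longleftrightarrow> \<not> (\<forall>p\<in>?E. \<forall>q\<in>?E. p = q)"
    unfolding share_side_def by blast
  also have "\<dots> \<longleftrightarrow> \<not> card ?E \<le> 1"
    using card_le_Suc0_iff_eq[of ?E] finite_corners[OF assms(1)] E by simp
  also have "card ?E = card (corners u \<inter> corners w)"
    unfolding E by (rule card_image) (rule inj_on_subset[OF inj], simp)
  finally show ?thesis by linarith
qed

definition shared_corner_count :: "int \<times> int \<times> int \<Rightarrow> int \<times> int \<times> int \<Rightarrow> nat" where
  "shared_corner_count k l = (if adj6 k l then 2 else if adj26 k l then 1 else 0)"

lemma adj6_imp_adj26: "adj6 k l \<Longrightarrow> adj26 k l"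
  by (auto simp: adj6_def adj26_def split: prod.splits)

lemma card_common_corners:
  assumes "u \<in> tiles" "w \<in> tiles" "u \<noteq> w"
  shows "card (corners u \<inter> corners w) = shared_corner_count (cub u) (cub w)"
proof -
  obtain a b c d where u: "u = up_tri a b \<or> u = down_tri a b" and w: "w = up_tri c d \<or> w = down_tri c d"
    using assms(1,2) by (auto simp: tiles_def)
  \<comment> \<open>corners lie in the unit square at the base point, so only the nine nearby
    base points need to be inspected\<close>
  show ?thesis
  proof (cases "\<bar>c - a\<bar> \<le> 1 \<and> \<bar>d - b\<bar> \<le> 1")
    case True
    then have "c \<in> {a - 1, a, a + 1}" "d \<in> {b - 1, b, b + 1}"
      by auto
    then show ?thesis
      using u w assms(3)
      by (elim insertE emptyE disjE)
        (simp_all add: corners_up_tri corners_down_tri cub_up_tri cub_down_tri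
          shared_corner_count_def adj6_def adj26_def Int_insert_left)
  next
    case False
    then have "corners u \<inter> corners w = {}"
      using u w by (auto simp: corners_up_tri corners_down_tri)
    moreover have "\<not> adj26 (cub u) (cub w)"
      using False u w by (auto simp: cub_up_tri cub_down_tri adj26_def)
    ultimately show ?thesis
      by (auto simp: shared_corner_count_def dest: adj6_imp_adj26)
  qed
qed

lemma share_side_iff_adj6:
  assumes "u \<in> tiles" "w \<in> tiles" "u \<noteq> w"
  shows "share_side u w \<longleftrightarrow> adj6 (cub u) (cub w)"
  using card_common_corners[OF assms] share_side_iff_two_common_corners[OF assms(1,2)]
  by (simp add: shared_corner_count_def)

lemma share_vertex_iff_adj26:
  assumes "u \<in> tiles" "w \<in> tiles" "u \<noteq> w"
  shows "share_vertex u w \<longleftrightarrow> adj26 (cub u) (cub w)"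
proof -
  have "share_vertex u w \<longleftrightarrow> card (corners u \<inter> corners w) \<noteq> 0"
    using share_vertex_iff_common_corner[OF assms(1,2)] finite_corners[OF assms(1)] by simp
  then show ?thesis
    using card_common_corners[OF assms] by (simp add: shared_corner_count_def adj6_imp_adj26)
qed

theorem mainTheorem3:
  assumes "A \<subseteq> tiles"
  shows "(edge_connected A \<longleftrightarrow> connected6 (cub ` A)) \<and>
         (vertex_connected A \<longleftrightarrow> connected26 (cub ` A))"
proof -
  have inj: "inj_on cub A"
    using cub_inj_on_tiles assms by (rule inj_on_subset)
  have "edge_connected A \<longleftrightarrow> connected6 (cub ` A)"
    unfolding edge_connected_def connected6_def
    by (rule chain_connected_image[OF inj]) (use assms share_side_iff_adj6 in blast)
  moreover have "vertex_connected A \<longleftrightarrow> connected26 (cub ` A)"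
    unfolding vertex_connected_def connected26_def
    by (rule chain_connected_image[OF inj]) (use assms share_vertex_iff_adj26 in blast)
  ultimately show ?thesis ..
qed

end
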